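(* Let $C$ be a finite set. Let $\mathbb P$ be a probability measure on $\{0,1\}^C$ of the form $\bigotimes_{i\in C}\mathrm{Bernoulli}(p_i)$. Let $\mathcal E_1$ and $\mathcal E_2$ be two increasing subsets of $\{0,1\}^C$. Let $\mathbf P$ be a probability measure on $\{0,1\}^{C\times\{1,2\}}$ of the form $\bigotimes_{i\in C}\rho_i$, where each $\rho_i$ is a probability measure on $\{0,1\}^{\{i\}\times\{1,2\}}\cong\{0,1\}^2$ both of whose marginals are Bernoulli distributions of parameter at least $p_i$. Then $\mathbb P(\mathcal E_1\circ\mathcal E_2)\le \mathbf P(\mathcal E_1\times\mathcal E_2)$, where $\mathcal E_1\times\mathcal E_2$ denotes the set of $\omega\in\{0,1\}^{C\times\{1,2\}}$ with $(\omega_{(i,1)})_{i\in C}\in\mathcal E_1$ and $(\omega_{(i,2)})_{i\in C}\in\mathcal E_2$.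
   Context: A subset $\mathcal E\subset\{0,1\}^C$ is increasing if $\omega\in\mathcal E$ and $\omega\le\omega'$ coordinatewise imply $\omega'\in\mathcal E$. The disjoint occurrence $\mathcal E_1\circ\mathcal E_2$ is the set of $\omega\in\{0,1\}^C$ for which there exist disjoint subsets $P_1,P_2\subset C$ such that, for $j\in\{1,2\}$, every $\omega'\in\{0,1\}^C$ agreeing with $\omega$ on $P_j$ belongs to $\mathcal E_j$. *)

theory Defs
  imports "HOL-Probability.Probability"
begin

text \<open>Configurations in {0,1}^C are encoded as functions 'c => bool which are
  False outside C (the default value used by Pi_pmf).\<close>

definition config :: "'c set \<Rightarrow> ('c \<Rightarrow> bool) set" where
  "config C = {\<omega>. \<forall>i. i \<notin> C \<longrightarrow> \<omega> i = False}"

definition increasing :: "'c set \<Rightarrow> ('c \<Rightarrow> bool) set \<Rightarrow> bool" where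
  "increasing C E \<longleftrightarrow> E \<subseteq> config C \<and>
     (\<forall>\<omega> \<in> E. \<forall>\<omega>' \<in> config C. (\<forall>i \<in> C. \<omega> i \<longrightarrow> \<omega>' i) \<longrightarrow> \<omega>' \<in> E)"

definition disj_occ :: "'c set \<Rightarrow> ('c \<Rightarrow> bool) set \<Rightarrow> ('c \<Rightarrow> bool) set \<Rightarrow> ('c \<Rightarrow> bool) set" where
  "disj_occ C E1 E2 = {\<omega> \<in> config C. \<exists>P1 P2. P1 \<subseteq> C \<and> P2 \<subseteq> C \<and> P1 \<inter> P2 = {} \<and>
     (\<forall>\<omega>' \<in> config C. (\<forall>i \<in> P1. \<omega>' i = \<omega> i) \<longrightarrow> \<omega>' \<in> E1) \<and>
     (\<forall>\<omega>' \<in> config C. (\<forall>i \<in> P2. \<omega>' i = \<omega> i) \<longrightarrow> \<omega>' \<in> E2)}"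

text \<open>{0,1}^(C x {1,2}) is encoded as functions 'c => bool x bool, equal to
  (False,False) outside C; omega(i,1) = fst (omega i), omega(i,2) = snd (omega i).\<close>

definition prod_event :: "'c set \<Rightarrow> ('c \<Rightarrow> bool) set \<Rightarrow> ('c \<Rightarrow> bool) set \<Rightarrow> ('c \<Rightarrow> bool \<times> bool) set" where
  "prod_event C E1 E2 = {\<eta>. (\<forall>i. i \<notin> C \<longrightarrow> \<eta> i = (False, False)) \<and>
     (\<lambda>i. fst (\<eta> i)) \<in> E1 \<and> (\<lambda>i. snd (\<eta> i)) \<in> E2}"

end

theory Submission
  imports Defs
begin

text \<open>Interpolate between the two sides. For \<open>D \<subseteq> C\<close> let \<open>G\<^sub>D\<close> be the event that
  \<open>E1\<close> is witnessed on the first layer and \<open>E2\<close> on the second by sets \<open>P1\<close>, \<open>P2\<close> that may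
  overlap only inside \<open>D\<close>, and sample the coordinates in \<open>D\<close> from \<open>\<rho>\<close> and the others
  diagonally, i.e. one \<open>Bernoulli(p i)\<close> bit copied to both layers. For \<open>D = {}\<close> this gives
  the probability of \<open>E1 \<circ> E2\<close>, for \<open>D = C\<close> that of \<open>E1 \<times> E2\<close>. Adding a coordinate \<open>j\<close>
  to \<open>D\<close> cannot decrease it: conditionally on the other coordinates the event is increasing
  in \<open>j\<close>, and if \<open>j\<close> is pivotal for the diagonal bit then it lies in at most one witness,
  so it suffices that a single layer is open at \<open>j\<close>, which has \<open>\<rho> j\<close>-probability at
  least \<open>p j\<close>.\<close>

definition witness :: "'c set \<Rightarrow> ('c \<Rightarrow> bool) set \<Rightarrow> 'c set \<Rightarrow> ('c \<Rightarrow> bool) \<Rightarrow> bool" where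
  "witness C E P \<omega> \<longleftrightarrow> (\<forall>\<omega>' \<in> config C. (\<forall>i \<in> P. \<omega>' i = \<omega> i) \<longrightarrow> \<omega>' \<in> E)"

lemma witness_imp_mem: "witness C E P \<omega> \<Longrightarrow> \<omega> \<in> config C \<Longrightarrow> \<omega> \<in> E"
  unfolding witness_def by blast

lemma witness_self:
  assumes "\<omega> \<in> E" "\<omega> \<in> config C"
  shows "witness C E C \<omega>"
proof -
  have "\<omega>' = \<omega>" if "\<omega>' \<in> config C" "\<forall>i \<in> C. \<omega>' i = \<omega> i" for \<omega>'
    using that \<open>\<omega> \<in> config C\<close> unfolding config_def by (auto simp: fun_eq_iff)
  then show ?thesis
    using \<open>\<omega> \<in> E\<close> unfolding witness_def by blast
qed

lemma witness_mono:
  assumes "increasing C E" "witness C E P \<omega>" "P \<subseteq> C" "\<forall>i \<in> P. \<omega> i \<longrightarrow> \<omega>' i"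
  shows "witness C E P \<omega>'"
  unfolding witness_def
proof (intro ballI impI)
  fix \<xi> assume \<xi>: "\<xi> \<in> config C" and agree: "\<forall>i \<in> P. \<xi> i = \<omega>' i"
  define \<zeta> where "\<zeta> i = (if i \<in> P then \<omega> i else \<xi> i)" for i
  have "\<zeta> \<in> config C"
    using \<xi> \<open>P \<subseteq> C\<close> by (auto simp: config_def \<zeta>_def)
  then have "\<zeta> \<in> E"
    using \<open>witness C E P \<omega>\<close> by (auto simp: witness_def \<zeta>_def)
  moreover have "\<forall>i \<in> C. \<zeta> i \<longrightarrow> \<xi> i"
    using agree assms(4) by (auto simp: \<zeta>_def)
  ultimately show "\<xi> \<in> E"
    using \<xi> \<open>increasing C E\<close> unfolding increasing_def by blast
qed

definition disj_occ_outside ::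
    "'c set \<Rightarrow> 'c set \<Rightarrow> ('c \<Rightarrow> bool) set \<Rightarrow> ('c \<Rightarrow> bool) set \<Rightarrow> ('c \<Rightarrow> bool \<times> bool) set" where
  "disj_occ_outside C D E1 E2 = {\<eta>. (\<forall>i. i \<notin> C \<longrightarrow> \<eta> i = (False, False)) \<and>
     (\<exists>P1 P2. P1 \<subseteq> C \<and> P2 \<subseteq> C \<and> P1 \<inter> P2 \<subseteq> D \<and>
       witness C E1 P1 (fst \<circ> \<eta>) \<and> witness C E2 P2 (snd \<circ> \<eta>))}"

lemma disj_occ_outside_mono: "D \<subseteq> D' \<Longrightarrow> disj_occ_outside C D E1 E2 \<subseteq> disj_occ_outside C D' E1 E2"
  unfolding disj_occ_outside_def by blast

lemma disj_occ_outside_empty: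
  "(\<lambda>\<omega>. (\<lambda>x. (x, x)) \<circ> \<omega>) -` disj_occ_outside C {} E1 E2 = disj_occ C E1 E2"
  by (auto simp: disj_occ_outside_def disj_occ_def witness_def config_def comp_def)

lemma disj_occ_outside_full: "disj_occ_outside C C E1 E2 = prod_event C E1 E2"
proof -
  have layers_config: "fst \<circ> \<eta> \<in> config C" "snd \<circ> \<eta> \<in> config C"
    if "\<forall>i. i \<notin> C \<longrightarrow> \<eta> i = (False, False)" for \<eta> :: "'a \<Rightarrow> bool \<times> bool"
    using that by (auto simp: config_def)
  show ?thesis
  proof (intro equalityI subsetI)
    fix \<eta> assume "\<eta> \<in> disj_occ_outside C C E1 E2"
    then obtain P1 P2 where vanish: "\<forall>i. i \<notin> C \<longrightarrow> \<eta> i = (False, False)"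
      and "witness C E1 P1 (fst \<circ> \<eta>)" "witness C E2 P2 (snd \<circ> \<eta>)"
      unfolding disj_occ_outside_def by blast
    then have "fst \<circ> \<eta> \<in> E1" "snd \<circ> \<eta> \<in> E2"
      using layers_config witness_imp_mem by blast+
    with vanish show "\<eta> \<in> prod_event C E1 E2"
      unfolding prod_event_def comp_def by blast
  next
    fix \<eta> assume "\<eta> \<in> prod_event C E1 E2"
    then have "witness C E1 C (fst \<circ> \<eta>)" "witness C E2 C (snd \<circ> \<eta>)"
      unfolding prod_event_def using layers_config by (auto intro: witness_self simp: comp_def)
    with \<open>\<eta> \<in> prod_event C E1 E2\<close> show "\<eta> \<in> disj_occ_outside C C E1 E2"
      unfolding disj_occ_outside_def prod_event_def by blast
  qed
qed

lemma disj_occ_outside_increasing: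
  assumes "increasing C E1" "increasing C E2" "\<eta> \<in> disj_occ_outside C D E1 E2"
    and "\<forall>i. i \<notin> C \<longrightarrow> \<eta>' i = (False, False)"
    and "\<forall>i. fst (\<eta> i) \<longrightarrow> fst (\<eta>' i)" "\<forall>i. snd (\<eta> i) \<longrightarrow> snd (\<eta>' i)"
  shows "\<eta>' \<in> disj_occ_outside C D E1 E2"
proof -
  obtain P1 P2 where P: "P1 \<subseteq> C" "P2 \<subseteq> C" "P1 \<inter> P2 \<subseteq> D"
    and "witness C E1 P1 (fst \<circ> \<eta>)" "witness C E2 P2 (snd \<circ> \<eta>)"
    using \<open>\<eta> \<in> disj_occ_outside C D E1 E2\<close> unfolding disj_occ_outside_def by blast
  then have "witness C E1 P1 (fst \<circ> \<eta>')" "witness C E2 P2 (snd \<circ> \<eta>')"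
    using witness_mono[of C E1 P1 "fst \<circ> \<eta>"] witness_mono[of C E2 P2 "snd \<circ> \<eta>"] assms(1,2,5,6)
    by simp_all
  with P assms(4) show ?thesis
    unfolding disj_occ_outside_def by blast
qed

lemma disj_occ_outside_pivotal:
  assumes "increasing C E1" "increasing C E2"
    and "f(j := (True, True)) \<in> disj_occ_outside C D E1 E2" "j \<notin> D"
  shows "(\<forall>y. fst y \<longrightarrow> f(j := y) \<in> disj_occ_outside C D E1 E2)
       \<or> (\<forall>y. snd y \<longrightarrow> f(j := y) \<in> disj_occ_outside C D E1 E2)"
proof -
  let ?\<eta> = "f(j := (True, True))"
  obtain P1 P2 where vanish: "\<forall>i. i \<notin> C \<longrightarrow> ?\<eta> i = (False, False)"
    and P: "P1 \<subseteq> C" "P2 \<subseteq> C" "P1 \<inter> P2 \<subseteq> D"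
    and W: "witness C E1 P1 (fst \<circ> ?\<eta>)" "witness C E2 P2 (snd \<circ> ?\<eta>)"
    using assms(3) unfolding disj_occ_outside_def by blast
  have vanish_upd: "\<forall>i. i \<notin> C \<longrightarrow> (f(j := y)) i = (False, False)" for y
    using vanish by (metis fun_upd_apply prod.inject)
  have mem_if: "f(j := y) \<in> disj_occ_outside C D E1 E2"
    if "\<forall>i\<in>P1. fst (?\<eta> i) \<longrightarrow> fst ((f(j := y)) i)"
       "\<forall>i\<in>P2. snd (?\<eta> i) \<longrightarrow> snd ((f(j := y)) i)" for y
  proof -
    have "witness C E1 P1 (fst \<circ> f(j := y))" "witness C E2 P2 (snd \<circ> f(j := y))"
      using witness_mono[OF assms(1) W(1) P(1)] witness_mono[OF assms(2) W(2) P(2)] that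
      by simp_all
    with P vanish_upd show ?thesis
      unfolding disj_occ_outside_def by blast
  qed
  have "j \<notin> P1 \<or> j \<notin> P2"
    using P(3) \<open>j \<notin> D\<close> by blast
  then show ?thesis
  proof
    assume "j \<notin> P1"
    then have "f(j := y) \<in> disj_occ_outside C D E1 E2" if "snd y" for y
      using that by (intro mem_if) auto
    then show ?thesis by blast
  next
    assume "j \<notin> P2"
    then have "f(j := y) \<in> disj_occ_outside C D E1 E2" if "fst y" for y
      using that by (intro mem_if) auto
    then show ?thesis by blast
  qed
qed

lemma prob_diagonal_le_prob_coupling:
  assumes "increasing C E1" "increasing C E2" "j \<in> C" "j \<notin> D" "0 \<le> q" "q \<le> 1"
    and "measure_pmf.prob R {y. fst y} \<ge> q" "measure_pmf.prob R {y. snd y} \<ge> q"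
  shows "measure_pmf.prob (bernoulli_pmf q) {x. f(j := (x, x)) \<in> disj_occ_outside C D E1 E2}
       \<le> measure_pmf.prob R {y. f(j := y) \<in> disj_occ_outside C (insert j D) E1 E2}"
    (is "measure_pmf.prob _ ?A \<le> measure_pmf.prob R ?B")
proof -
  let ?G = "disj_occ_outside C D E1 E2"
  have B: "{y. f(j := y) \<in> ?G} \<subseteq> ?B"
    using disj_occ_outside_mono[of D "insert j D"] by blast
  consider (closed_irrelevant) "f(j := (False, False)) \<in> ?G"
    | (pivotal) "f(j := (False, False)) \<notin> ?G" "f(j := (True, True)) \<in> ?G"
    | (open_irrelevant) "f(j := (False, False)) \<notin> ?G" "f(j := (True, True)) \<notin> ?G"
    by blast
  then show ?thesis
  proof cases
    case closed_irrelevant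
    have "\<forall>i. i \<notin> C \<longrightarrow> (f(j := y)) i = (False, False)" for y
      using closed_irrelevant \<open>j \<in> C\<close> unfolding disj_occ_outside_def by auto
    then have "f(j := y) \<in> ?G" for y
      using disj_occ_outside_increasing[OF assms(1,2) closed_irrelevant] by simp
    then have "?B = UNIV"
      using B by blast
    then show ?thesis by simp
  next
    case pivotal
    then have "x \<in> ?A \<longleftrightarrow> x" for x
      by (cases x) simp_all
    then have "?A = {True}"
      by blast
    then have "measure_pmf.prob (bernoulli_pmf q) ?A = q"
      using \<open>0 \<le> q\<close> \<open>q \<le> 1\<close> by (simp add: measure_pmf_single)
    also have "q \<le> measure_pmf.prob R ?B"
      using disj_occ_outside_pivotal[OF assms(1,2) pivotal(2) \<open>j \<notin> D\<close>]
    proof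
      assume "\<forall>y. fst y \<longrightarrow> f(j := y) \<in> ?G"
      then have "measure_pmf.prob R {y. fst y} \<le> measure_pmf.prob R ?B"
        using B by (intro measure_pmf.finite_measure_mono) auto
      with assms(7) show ?thesis by linarith
    next
      assume "\<forall>y. snd y \<longrightarrow> f(j := y) \<in> ?G"
      then have "measure_pmf.prob R {y. snd y} \<le> measure_pmf.prob R ?B"
        using B by (intro measure_pmf.finite_measure_mono) auto
      with assms(8) show ?thesis by linarith
    qed
    finally show ?thesis .
  next
    case open_irrelevant
    then have "x \<notin> ?A" for x
      by (cases x) simp_all
    then have "?A = {}"
      by blast
    then show ?thesis by simp
  qed
qed

lemma measure_Pi_pmf_insert_mono:
  assumes "finite A" "x \<notin> A" "\<And>i. i \<in> A \<Longrightarrow> F i = F' i"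
    and "\<And>f. measure_pmf.prob (F x) {y. f(x := y) \<in> S} \<le> measure_pmf.prob (F' x) {y. f(x := y) \<in> S'}"
  shows "measure_pmf.prob (Pi_pmf (insert x A) d F) S \<le> measure_pmf.prob (Pi_pmf (insert x A) d F') S'"
proof -
  have Pi_insert: "Pi_pmf (insert x A) d G = Pi_pmf A d G \<bind> (\<lambda>f. map_pmf (\<lambda>y. f(x := y)) (G x))" for G
    unfolding Pi_pmf_insert'[OF assms(1,2)] map_pmf_def by (rule bind_commute_pmf)
  have same_rest: "Pi_pmf A d F = Pi_pmf A d F'"
    using assms(3) by (intro Pi_pmf_cong) simp_all
  have "emeasure (Pi_pmf (insert x A) d F) S \<le> emeasure (Pi_pmf (insert x A) d F') S'"
    unfolding Pi_insert same_rest emeasure_bind_pmf emeasure_map_pmf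
    using assms(4) by (intro nn_integral_mono) (simp add: measure_pmf.emeasure_eq_measure vimage_def)
  then show ?thesis
    by (simp add: measure_pmf.emeasure_eq_measure)
qed

definition hybrid_pmf :: "'c set \<Rightarrow> ('c \<Rightarrow> real) \<Rightarrow> ('c \<Rightarrow> (bool \<times> bool) pmf) \<Rightarrow> 'c \<Rightarrow> (bool \<times> bool) pmf" where
  "hybrid_pmf D p \<rho> i = (if i \<in> D then \<rho> i else map_pmf (\<lambda>x. (x, x)) (bernoulli_pmf (p i)))"

context
  fixes C :: "'c set" and p :: "'c \<Rightarrow> real" and \<rho> :: "'c \<Rightarrow> (bool \<times> bool) pmf"
    and E1 E2 :: "('c \<Rightarrow> bool) set"
  assumes finite_C: "finite C"
    and p_prob: "\<And>i. i \<in> C \<Longrightarrow> 0 \<le> p i \<and> p i \<le> 1"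
    and E_increasing: "increasing C E1" "increasing C E2"
    and marginals: "\<And>i. i \<in> C \<Longrightarrow> measure_pmf.prob (\<rho> i) {x. fst x} \<ge> p i"
      "\<And>i. i \<in> C \<Longrightarrow> measure_pmf.prob (\<rho> i) {x. snd x} \<ge> p i"
begin

lemma prob_hybrid_insert_mono:
  assumes "a \<in> C" "a \<notin> D"
  shows "measure_pmf.prob (Pi_pmf C (False, False) (hybrid_pmf D p \<rho>)) (disj_occ_outside C D E1 E2)
       \<le> measure_pmf.prob (Pi_pmf C (False, False) (hybrid_pmf (insert a D) p \<rho>))
           (disj_occ_outside C (insert a D) E1 E2)"
proof -
  have C: "C = insert a (C - {a})"
    using \<open>a \<in> C\<close> by blast
  have "measure_pmf.prob (hybrid_pmf D p \<rho> a) {y. f(a := y) \<in> disj_occ_outside C D E1 E2}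
      \<le> measure_pmf.prob (hybrid_pmf (insert a D) p \<rho> a)
           {y. f(a := y) \<in> disj_occ_outside C (insert a D) E1 E2}" for f
  proof -
    have "measure_pmf.prob (hybrid_pmf D p \<rho> a) {y. f(a := y) \<in> disj_occ_outside C D E1 E2}
        = measure_pmf.prob (bernoulli_pmf (p a)) {x. f(a := (x, x)) \<in> disj_occ_outside C D E1 E2}"
      using \<open>a \<notin> D\<close> by (simp add: hybrid_pmf_def vimage_def)
    also have "\<dots> \<le> measure_pmf.prob (\<rho> a) {y. f(a := y) \<in> disj_occ_outside C (insert a D) E1 E2}"
      using p_prob[OF \<open>a \<in> C\<close>]
      by (intro prob_diagonal_le_prob_coupling[OF E_increasing assms _ _ marginals[OF \<open>a \<in> C\<close>]]) auto
    finally show ?thesis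
      by (simp add: hybrid_pmf_def)
  qed
  then have "measure_pmf.prob (Pi_pmf (insert a (C - {a})) (False, False) (hybrid_pmf D p \<rho>))
        (disj_occ_outside C D E1 E2)
      \<le> measure_pmf.prob (Pi_pmf (insert a (C - {a})) (False, False) (hybrid_pmf (insert a D) p \<rho>))
        (disj_occ_outside C (insert a D) E1 E2)"
    using finite_C by (intro measure_Pi_pmf_insert_mono) (auto simp: hybrid_pmf_def)
  then show ?thesis
    unfolding C[symmetric] .
qed

lemma prob_hybrid_mono:
  assumes "D \<subseteq> C"
  shows "measure_pmf.prob (Pi_pmf C (False, False) (hybrid_pmf {} p \<rho>)) (disj_occ_outside C {} E1 E2)
       \<le> measure_pmf.prob (Pi_pmf C (False, False) (hybrid_pmf D p \<rho>)) (disj_occ_outside C D E1 E2)"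
  using finite_subset[OF assms finite_C] assms
proof (induction D rule: finite_induct)
  case empty
  then show ?case by simp
next
  case (insert a D)
  then show ?case
    using prob_hybrid_insert_mono[of a D] by simp
qed

end

theorem proposition5p2:
  fixes C :: "'c set" and p :: "'c \<Rightarrow> real" and \<rho> :: "'c \<Rightarrow> (bool \<times> bool) pmf"
    and E1 E2 :: "('c \<Rightarrow> bool) set"
  assumes "finite C"
    and "\<And>i. i \<in> C \<Longrightarrow> 0 \<le> p i \<and> p i \<le> 1"
    and "increasing C E1" and "increasing C E2"
    and "\<And>i. i \<in> C \<Longrightarrow> measure_pmf.prob (\<rho> i) {x. fst x} \<ge> p i"
    and "\<And>i. i \<in> C \<Longrightarrow> measure_pmf.prob (\<rho> i) {x. snd x} \<ge> p i"
  shows "measure_pmf.prob (Pi_pmf C False (\<lambda>i. bernoulli_pmf (p i))) (disj_occ C E1 E2)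
         \<le> measure_pmf.prob (Pi_pmf C (False, False) \<rho>) (prod_event C E1 E2)"
proof -
  have diagonal: "Pi_pmf C (False, False) (hybrid_pmf {} p \<rho>)
      = map_pmf (\<lambda>\<omega>. (\<lambda>x. (x, x)) \<circ> \<omega>) (Pi_pmf C False (\<lambda>i. bernoulli_pmf (p i)))"
    unfolding hybrid_pmf_def by (simp add: Pi_pmf_map[OF \<open>finite C\<close>])
  have coupling: "Pi_pmf C (False, False) (hybrid_pmf C p \<rho>) = Pi_pmf C (False, False) \<rho>"
    by (intro Pi_pmf_cong) (simp_all add: hybrid_pmf_def)
  have "measure_pmf.prob (Pi_pmf C False (\<lambda>i. bernoulli_pmf (p i))) (disj_occ C E1 E2)
      = measure_pmf.prob (Pi_pmf C (False, False) (hybrid_pmf {} p \<rho>)) (disj_occ_outside C {} E1 E2)"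
    by (simp add: diagonal measure_map_pmf disj_occ_outside_empty)
  also have "\<dots> \<le> measure_pmf.prob (Pi_pmf C (False, False) (hybrid_pmf C p \<rho>)) (disj_occ_outside C C E1 E2)"
    using prob_hybrid_mono[OF assms order_refl] .
  also have "\<dots> = measure_pmf.prob (Pi_pmf C (False, False) \<rho>) (prod_event C E1 E2)"
    by (simp add: coupling disj_occ_outside_full)
  finally show ?thesis .
qed

end
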